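(* Let $n\ge2$. The metric $g_{ij}(p)=\left(\frac{1}{n-1}-\delta_{ij}\right)p_ip_j$ on $\{p\in\mathbb{C}^n: p_i\neq0\ \forall i\}$ is flat. *)

theory Defs
  imports "HOL-Analysis.Analysis"
begin

text \<open>Points of C^n are functions p :: nat => complex, only coordinates i < n matter.\<close>

definition pd :: "nat \<Rightarrow> ((nat \<Rightarrow> complex) \<Rightarrow> complex) \<Rightarrow> (nat \<Rightarrow> complex) \<Rightarrow> complex" where
  "pd i f p = deriv (\<lambda>t. f (p(i := t))) (p i)"

definition is_inv_mat :: "nat \<Rightarrow> (nat \<Rightarrow> nat \<Rightarrow> complex) \<Rightarrow> (nat \<Rightarrow> nat \<Rightarrow> complex) \<Rightarrow> bool" where
  "is_inv_mat n A B \<longleftrightarrow>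
     (\<forall>i<n. \<forall>j<n. (\<Sum>k<n. A i k * B k j) = (if i = j then 1 else 0)) \<and>
     (\<forall>i<n. \<forall>j<n. (\<Sum>k<n. B i k * A k j) = (if i = j then 1 else 0)) \<and>
     (\<forall>i j. (n \<le> i \<or> n \<le> j) \<longrightarrow> B i j = 0)"

definition nondegenerate :: "nat \<Rightarrow> (nat \<Rightarrow> nat \<Rightarrow> complex) \<Rightarrow> bool" where
  "nondegenerate n A \<longleftrightarrow> (\<exists>B. is_inv_mat n A B)"

definition inv_metric :: "nat \<Rightarrow> (nat \<Rightarrow> nat \<Rightarrow> (nat \<Rightarrow> complex) \<Rightarrow> complex)
    \<Rightarrow> nat \<Rightarrow> nat \<Rightarrow> (nat \<Rightarrow> complex) \<Rightarrow> complex" where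
  "inv_metric n g k l p = (THE B. is_inv_mat n (\<lambda>i j. g i j p) B) k l"

definition christoffel :: "nat \<Rightarrow> (nat \<Rightarrow> nat \<Rightarrow> (nat \<Rightarrow> complex) \<Rightarrow> complex)
    \<Rightarrow> nat \<Rightarrow> nat \<Rightarrow> nat \<Rightarrow> (nat \<Rightarrow> complex) \<Rightarrow> complex" where
  "christoffel n g k i j p =
     (\<Sum>l<n. inv_metric n g k l p *
        (pd i (g j l) p + pd j (g i l) p - pd l (g i j) p)) / 2"

definition riemann :: "nat \<Rightarrow> (nat \<Rightarrow> nat \<Rightarrow> (nat \<Rightarrow> complex) \<Rightarrow> complex)
    \<Rightarrow> nat \<Rightarrow> nat \<Rightarrow> nat \<Rightarrow> nat \<Rightarrow> (nat \<Rightarrow> complex) \<Rightarrow> complex" where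
  "riemann n g l i j k p =
     pd i (christoffel n g l j k) p - pd j (christoffel n g l i k) p
     + (\<Sum>m<n. christoffel n g l i m p * christoffel n g m j k p
               - christoffel n g l j m p * christoffel n g m i k p)"

definition flat_metric :: "nat \<Rightarrow> (nat \<Rightarrow> nat \<Rightarrow> (nat \<Rightarrow> complex) \<Rightarrow> complex)
    \<Rightarrow> (nat \<Rightarrow> complex) set \<Rightarrow> bool" where
  "flat_metric n g U \<longleftrightarrow>
     (\<forall>p\<in>U. nondegenerate n (\<lambda>i j. g i j p)) \<and>
     (\<forall>p\<in>U. \<forall>l<n. \<forall>i<n. \<forall>j<n. \<forall>k<n. riemann n g l i j k p = 0)"

end

theory Submission
  imports Defs
begin

text \<open>In the coordinates \<open>q\<^sub>i = p\<^sub>i\<^sup>2 / 2\<close> we have \<open>dq\<^sub>i = p\<^sub>i dp\<^sub>i\<close>, so every metric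
  \<open>g\<^sub>i\<^sub>j(p) = a\<^sub>i\<^sub>j p\<^sub>i p\<^sub>j\<close> with a constant symmetric invertible matrix \<open>a\<close> is a constant metric
  in disguise and hence flat. Concretely, its inverse is \<open>b\<^sub>k\<^sub>l / (p\<^sub>k p\<^sub>l)\<close> for \<open>b = a\<^sup>-\<^sup>1\<close>,
  its only nonzero Christoffel symbols are \<open>\<Gamma>\<^sup>k\<^sub>k\<^sub>k = 1 / p\<^sub>k\<close>, and all terms of the curvature
  tensor cancel in pairs. The theorem is the case \<open>a = J / (n - 1) - I\<close> (\<open>J\<close> the all-ones
  matrix), whose inverse is \<open>J - I\<close> because \<open>J\<^sup>2 = n J\<close>.\<close>

lemma is_inv_mat_unique:
  assumes "is_inv_mat n A B" "is_inv_mat n A B'"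
  shows "B = B'"
proof (intro ext)
  fix i j
  show "B i j = B' i j"
  proof (cases "i < n \<and> j < n")
    case True
    have "B' i j = (\<Sum>k<n. if i = k then B' k j else 0)"
      using True by simp
    also have "\<dots> = (\<Sum>k<n. (if i = k then 1 else 0) * B' k j)"
      by (intro sum.cong) auto
    also have "\<dots> = (\<Sum>k<n. (\<Sum>m<n. B i m * A m k) * B' k j)"
      using assms(1) True unfolding is_inv_mat_def by (intro sum.cong) auto
    also have "\<dots> = (\<Sum>m<n. B i m * (\<Sum>k<n. A m k * B' k j))"
      by (simp add: sum_distrib_left sum_distrib_right mult.assoc) (rule sum.swap)
    also have "\<dots> = (\<Sum>m<n. B i m * (if m = j then 1 else 0))"
      using assms(2) True unfolding is_inv_mat_def by (intro sum.cong) auto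
    also have "\<dots> = (\<Sum>m<n. if m = j then B i m else 0)"
      by (intro sum.cong) auto
    also have "\<dots> = B i j"
      using True by simp
    finally show ?thesis by simp
  next
    case False
    then show ?thesis using assms unfolding is_inv_mat_def by auto
  qed
qed

lemma inv_metric_eqI:
  assumes "is_inv_mat n (\<lambda>i j. g i j p) B"
  shows "inv_metric n g k l p = B k l"
  using assms is_inv_mat_unique unfolding inv_metric_def by (metis the_equality)

lemma pd_cong_nonzero_coords:
  assumes "\<And>q. \<forall>i<n. q i \<noteq> 0 \<Longrightarrow> f q = h q" and "\<forall>i<n. p i \<noteq> 0" and "i < n"
  shows "pd i f p = pd i h p"
proof -
  have "\<forall>\<^sub>F t in nhds (p i). t \<noteq> 0"
    using assms(2,3) by (intro t1_space_nhds) auto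
  then have "\<forall>\<^sub>F t in nhds (p i). f (p(i := t)) = h (p(i := t))"
    by eventually_elim (use assms(1,2) in auto)
  then show ?thesis
    unfolding pd_def by (rule deriv_cong_ev) simp
qed

lemma pd_inverse_coord:
  assumes "p l \<noteq> 0"
  shows "pd i (\<lambda>q. 1 / q l) p = (if i = l then - 1 / (p l)\<^sup>2 else 0)"
proof (cases "i = l")
  case True
  have "((\<lambda>t. 1 / t) has_field_derivative - 1 / (p l)\<^sup>2) (at (p l))"
    using assms by (auto intro!: derivative_eq_intros simp: power2_eq_square field_simps)
  then show ?thesis
    using True unfolding pd_def by (simp add: DERIV_imp_deriv)
qed (simp add: pd_def)

definition scaled_metric :: "(nat \<Rightarrow> nat \<Rightarrow> complex) \<Rightarrow> nat \<Rightarrow> nat \<Rightarrow> (nat \<Rightarrow> complex) \<Rightarrow> complex"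
  where "scaled_metric a i j p = a i j * p i * p j"

lemma is_inv_mat_scaled_metric:
  assumes "is_inv_mat n a b" and "\<forall>i<n. p i \<noteq> 0"
  shows "is_inv_mat n (\<lambda>i j. scaled_metric a i j p) (\<lambda>k l. b k l / (p k * p l))"
proof -
  have "(\<Sum>k<n. scaled_metric a i k p * (b k j / (p k * p j))) = (p i / p j) * (\<Sum>k<n. a i k * b k j)"
    if "i < n" "j < n" for i j
    unfolding sum_distrib_left using assms(2) that
    by (intro sum.cong) (auto simp: scaled_metric_def field_simps)
  moreover have "(\<Sum>k<n. b i k / (p i * p k) * scaled_metric a k j p) = (p j / p i) * (\<Sum>k<n. b i k * a k j)"
    if "i < n" "j < n" for i j
    unfolding sum_distrib_left using assms(2) that
    by (intro sum.cong) (auto simp: scaled_metric_def field_simps)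
  ultimately show ?thesis
    using assms unfolding is_inv_mat_def by auto
qed

lemma inv_metric_scaled_metric:
  assumes "is_inv_mat n a b" and "\<forall>i<n. p i \<noteq> 0"
  shows "inv_metric n (scaled_metric a) k l p = b k l / (p k * p l)"
  by (rule inv_metric_eqI[where g = "scaled_metric a"]) (use is_inv_mat_scaled_metric[OF assms] in simp)

lemma pd_scaled_metric:
  "pd i (scaled_metric a j l) p =
     a j l * ((if i = j then 1 else 0) * p l + p j * (if i = l then 1 else 0))"
proof -
  have coord: "((\<lambda>t. (p(i := t)) j) has_field_derivative (if i = j then 1 else 0)) (at x)" for j x
    by (cases "i = j") (auto intro: derivative_eq_intros)
  have "deriv (\<lambda>t. a j l * ((p(i := t)) j * (p(i := t)) l)) (p i) =
      a j l * ((if i = j then 1 else 0) * (p(i := p i)) l + (if i = l then 1 else 0) * (p(i := p i)) j)"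
    by (rule DERIV_imp_deriv[OF DERIV_cmult[OF DERIV_mult[OF coord coord]]])
  then show ?thesis
    unfolding pd_def scaled_metric_def mult.assoc by (simp add: algebra_simps)
qed

lemma christoffel_scaled_metric:
  assumes sym: "\<forall>i<n. \<forall>j<n. a i j = a j i" and inv: "is_inv_mat n a b"
    and p: "\<forall>i<n. p i \<noteq> 0" and "k < n" "i < n" "j < n"
  shows "christoffel n (scaled_metric a) k i j p = (if i = j \<and> j = k then 1 / p k else 0)"
proof -
  have first_kind: "pd i (scaled_metric a j l) p + pd j (scaled_metric a i l) p
      - pd l (scaled_metric a i j) p = (if i = j then 2 * a i l * p l else 0)" if "l < n" for l
    using sym \<open>i < n\<close> \<open>j < n\<close> that unfolding pd_scaled_metric by (auto simp: algebra_simps)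
  have "christoffel n (scaled_metric a) k i j p
      = (if i = j then (1 / p k) * (\<Sum>l<n. b k l * a l i) else 0)"
    unfolding christoffel_def inv_metric_scaled_metric[OF inv p] sum_distrib_left
    using first_kind sym p \<open>k < n\<close> \<open>i < n\<close>
    by (auto simp: sum_divide_distrib field_simps intro!: sum.cong)
  then show ?thesis
    using inv \<open>k < n\<close> \<open>i < n\<close> unfolding is_inv_mat_def by auto
qed

lemma pd_christoffel_scaled_metric:
  assumes "\<forall>i<n. \<forall>j<n. a i j = a j i" and "is_inv_mat n a b"
    and p: "\<forall>i<n. p i \<noteq> 0" and "l < n" "i < n" "j < n" "k < n"
  shows "pd i (christoffel n (scaled_metric a) l j k) p
      = (if i = j \<and> j = k \<and> k = l then - 1 / (p l)\<^sup>2 else 0)"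
proof (cases "j = k \<and> k = l")
  case True
  have "pd i (christoffel n (scaled_metric a) l j k) p = pd i (\<lambda>q. 1 / q l) p"
    by (rule pd_cong_nonzero_coords) (use assms True christoffel_scaled_metric in auto)
  then show ?thesis
    using True p \<open>l < n\<close> by (simp add: pd_inverse_coord)
next
  case False
  have "pd i (christoffel n (scaled_metric a) l j k) p = pd i (\<lambda>q. 0) p"
    by (rule pd_cong_nonzero_coords) (use assms False christoffel_scaled_metric in auto)
  moreover have "pd i (\<lambda>q. 0) p = 0"
    by (simp add: pd_def)
  ultimately show ?thesis
    using False by auto
qed

lemma riemann_scaled_metric:
  assumes "\<forall>i<n. \<forall>j<n. a i j = a j i" and "is_inv_mat n a b"
    and "\<forall>i<n. p i \<noteq> 0" and "l < n" "i < n" "j < n" "k < n"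
  shows "riemann n (scaled_metric a) l i j k p = 0"
proof -
  have "(\<Sum>m<n. christoffel n (scaled_metric a) l i m p * christoffel n (scaled_metric a) m j k p
      - christoffel n (scaled_metric a) l j m p * christoffel n (scaled_metric a) m i k p) = 0"
    by (rule sum.neutral) (use assms in \<open>auto simp: christoffel_scaled_metric\<close>)
  then show ?thesis
    unfolding riemann_def using assms
    by (simp add: pd_christoffel_scaled_metric conj_commute conj_left_commute)
qed

theorem flat_metric_scaled_metric:
  assumes "\<forall>i<n. \<forall>j<n. a i j = a j i" and "is_inv_mat n a b"
  shows "flat_metric n (scaled_metric a) {p. \<forall>i<n. p i \<noteq> 0}"
  unfolding flat_metric_def nondegenerate_def
  using assms is_inv_mat_scaled_metric riemann_scaled_metric by blast

lemma is_inv_mat_ones_minus_identity: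
  fixes c :: complex
  assumes "c * (of_nat n - 1) = 1"
  shows "is_inv_mat n (\<lambda>i j. c - (if i = j then 1 else 0))
           (\<lambda>i j. if i < n \<and> j < n then 1 - (if i = j then 1 else 0) else 0)"
proof -
  have right: "(\<Sum>k<n. (c - (if i = k then 1 else 0)) * (1 - (if k = j then 1 else 0)))
      = (if i = j then 1 else 0)" if "i < n" "j < n" for i j
  proof -
    have "(\<Sum>k<n. (c - (if i = k then 1 else 0)) * (1 - (if k = j then 1 else 0)))
        = (\<Sum>k<n. c - (if k = j then c else 0) - (if i = k then 1 else 0)
                   + (if k = i then (if i = j then 1 else 0) else 0))"
      by (intro sum.cong) auto
    also have "\<dots> = c * (of_nat n - 1) - 1 + (if i = j then 1 else 0)"
      using that by (simp add: sum.distrib sum_subtractf algebra_simps)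
    finally show ?thesis using assms by simp
  qed
  have left: "(\<Sum>k<n. (1 - (if i = k then 1 else 0)) * (c - (if k = j then 1 else 0)))
      = (if i = j then 1 else 0)" if "i < n" "j < n" for i j
  proof -
    have "(\<Sum>k<n. (1 - (if i = k then 1 else 0)) * (c - (if k = j then 1 else 0)))
        = (\<Sum>k<n. (c - (if j = k then 1 else 0)) * (1 - (if k = i then 1 else 0)))"
      by (intro sum.cong) auto
    then show ?thesis
      using right[OF that(2,1)] by auto
  qed
  show ?thesis
    unfolding is_inv_mat_def using left right by (auto intro: sum.cong)
qed

theorem mainTheorem7:
  fixes n :: nat
  assumes "n \<ge> 2"
  shows "flat_metric n
           (\<lambda>i j p. (1 / (of_nat n - 1) - (if i = j then 1 else 0)) * p i * p j)
           {p. \<forall>i<n. p i \<noteq> 0}"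
proof -
  let ?a = "\<lambda>i j. 1 / (of_nat n - 1) - (if i = j then 1 else 0) :: complex"
  have "is_inv_mat n ?a (\<lambda>i j. if i < n \<and> j < n then 1 - (if i = j then 1 else 0) else 0)"
    by (intro is_inv_mat_ones_minus_identity) (use assms in simp)
  then have "flat_metric n (scaled_metric ?a) {p. \<forall>i<n. p i \<noteq> 0}"
    by (intro flat_metric_scaled_metric) auto
  then show ?thesis
    unfolding scaled_metric_def .
qed

end
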